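(* Let $d\ge1$ and let $\mu$ be a Borel probability measure on $S^{d-1}$. Then \[ (\mu\otimes\mu)\bigl(\{(u,v)\in (S^{d-1})^2: u\perp v\}\bigr)\le \frac{d-1}{d}. \] Equivalently, two independent $\mu$-distributed unit vectors are non-orthogonal with probability at least $1/d$.
   Context: $S^{d-1}$ is the unit sphere in $\mathbb R^d$; $\mu\otimes\mu$ is the product measure on $(S^{d-1})^2$. *)

theory Defs
  imports "HOL-Probability.Probability"
begin

end

theory Submission
  imports Defs
begin

(* Let m = E[u u^T 1_S(u)] be the second-moment matrix of \<mu> restricted to the unit sphere S.
   Its trace is \<mu>(S) = 1, and for independent u, v the expectation of <u,v>^2 over S x S is the
   squared Frobenius norm of m, which is at least (tr m)^2 / d = 1/d.  Since <u,v>^2 \<le> 1 on S x S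
   and it vanishes on orthogonal pairs, these have probability at most 1 - 1/d. *)

lemma (in pair_sigma_finite) integrable_mult_product:
  fixes f g :: "_ \<Rightarrow> real"
  assumes f: "integrable M1 f" and g: "integrable M2 g"
  shows "integrable (M1 \<Otimes>\<^sub>M M2) (\<lambda>(x, y). f x * g y)"
proof (rule integrableI_bounded)
  have [measurable]: "f \<in> borel_measurable M1" "g \<in> borel_measurable M2"
    using f g by auto
  show "(\<lambda>(x, y). f x * g y) \<in> borel_measurable (M1 \<Otimes>\<^sub>M M2)"
    by measurable
  have "(\<integral>\<^sup>+p. norm (case p of (x, y) \<Rightarrow> f x * g y) \<partial>(M1 \<Otimes>\<^sub>M M2))
      = (\<integral>\<^sup>+x. \<integral>\<^sup>+y. ennreal (norm (f x)) * ennreal (norm (g y)) \<partial>M2 \<partial>M1)"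
    by (subst M2.nn_integral_fst[symmetric]) (auto simp: abs_mult ennreal_mult)
  also have "\<dots> = (\<integral>\<^sup>+x. norm (f x) \<partial>M1) * (\<integral>\<^sup>+y. norm (g y) \<partial>M2)"
    by (simp add: nn_integral_cmult nn_integral_multc)
  also have "\<dots> < \<infinity>"
    using f g by (simp add: integrable_iff_bounded ennreal_mult_less_top)
  finally show "(\<integral>\<^sup>+p. norm (case p of (x, y) \<Rightarrow> f x * g y) \<partial>(M1 \<Otimes>\<^sub>M M2)) < \<infinity>" .
qed

lemma (in pair_sigma_finite) integral_mult_product:
  fixes f g :: "_ \<Rightarrow> real"
  assumes f: "integrable M1 f" and g: "integrable M2 g"
  shows "(\<integral>p. (case p of (x, y) \<Rightarrow> f x * g y) \<partial>(M1 \<Otimes>\<^sub>M M2)) = integral\<^sup>L M1 f * integral\<^sup>L M2 g"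
  using integral_fst[OF integrable_mult_product[OF f g]] by simp

lemma inner_square_eq_sum_Basis:
  fixes x y :: "'a::euclidean_space"
  shows "(inner x y)\<^sup>2 = (\<Sum>b\<in>Basis. \<Sum>c\<in>Basis. (inner x b * inner x c) * (inner y b * inner y c))"
  by (simp add: euclidean_inner[of x y] power2_eq_square sum_product algebra_simps)

lemma trace_square_le_sum_squares:
  fixes m :: "'a::euclidean_space \<Rightarrow> 'a \<Rightarrow> real"
  shows "(\<Sum>b\<in>Basis. m b b)\<^sup>2 / DIM('a) \<le> (\<Sum>b\<in>Basis. \<Sum>c\<in>Basis. (m b c)\<^sup>2)"
proof -
  have "(\<Sum>b\<in>Basis. m b b)\<^sup>2 / DIM('a) \<le> (\<Sum>b\<in>Basis. (m b b)\<^sup>2)"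
    using sum_squared_le_sum_of_squares[of "\<lambda>b. m b b" Basis] by (simp add: divide_le_eq)
  also have "\<dots> \<le> (\<Sum>b\<in>Basis. \<Sum>c\<in>Basis. (m b c)\<^sup>2)"
    by (intro sum_mono member_le_sum) auto
  finally show ?thesis .
qed

lemma (in finite_measure) integral_inner_square_ge:
  fixes X :: "'a \<Rightarrow> 'b::euclidean_space"
  assumes X[measurable]: "X \<in> borel_measurable M" and bound: "\<And>x. norm (X x) \<le> C"
  shows "(\<integral>x. (norm (X x))\<^sup>2 \<partial>M)\<^sup>2 / DIM('b)
    \<le> (\<integral>(x, y). (inner (X x) (X y))\<^sup>2 \<partial>(M \<Otimes>\<^sub>M M))"
proof -
  interpret pair_sigma_finite M M by unfold_locales
  define m where "m b c = (\<integral>x. inner (X x) b * inner (X x) c \<partial>M)" for b c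
  have coord: "\<bar>inner (X x) b\<bar> \<le> C" if "b \<in> Basis" for x b
    using Basis_le_norm[OF that, of "X x"] bound[of x] by simp
  have integrable_coord: "integrable M (\<lambda>x. inner (X x) b * inner (X x) c)"
    if "b \<in> Basis" "c \<in> Basis" for b c
    by (rule integrable_const_bound[where B="C * C"])
      (auto simp: abs_mult intro!: mult_mono coord that order_trans[OF abs_ge_zero coord])
  have "(\<integral>x. (norm (X x))\<^sup>2 \<partial>M) = (\<integral>x. (\<Sum>b\<in>Basis. inner (X x) b * inner (X x) b) \<partial>M)"
    by (simp add: power2_norm_eq_inner euclidean_inner[of "X _" "X _"])
  also have "\<dots> = (\<Sum>b\<in>Basis. m b b)"
    by (simp add: m_def integrable_coord)
  finally have trace: "(\<integral>x. (norm (X x))\<^sup>2 \<partial>M) = (\<Sum>b\<in>Basis. m b b)" .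
  have "(\<integral>(x, y). (inner (X x) (X y))\<^sup>2 \<partial>(M \<Otimes>\<^sub>M M))
      = (\<integral>p. (\<Sum>b\<in>Basis. \<Sum>c\<in>Basis. (case p of (x, y) \<Rightarrow>
           (inner (X x) b * inner (X x) c) * (inner (X y) b * inner (X y) c))) \<partial>(M \<Otimes>\<^sub>M M))"
    by (simp add: inner_square_eq_sum_Basis case_prod_unfold)
  also have "\<dots> = (\<Sum>b\<in>Basis. \<Sum>c\<in>Basis. (m b c)\<^sup>2)"
    by (simp add: integrable_mult_product integral_mult_product integrable_coord m_def
        power2_eq_square)
  finally have frobenius: "(\<integral>(x, y). (inner (X x) (X y))\<^sup>2 \<partial>(M \<Otimes>\<^sub>M M))
      = (\<Sum>b\<in>Basis. \<Sum>c\<in>Basis. (m b c)\<^sup>2)" .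
  show ?thesis
    unfolding trace frobenius by (rule trace_square_le_sum_squares)
qed

lemma (in prob_space) measure_pair_orthogonal_le:
  fixes X :: "'a \<Rightarrow> 'b::euclidean_space"
  assumes X[measurable]: "X \<in> borel_measurable M" and bound: "\<And>x. norm (X x) \<le> 1"
  shows "measure (M \<Otimes>\<^sub>M M) {p \<in> space (M \<Otimes>\<^sub>M M). inner (X (fst p)) (X (snd p)) = 0}
    \<le> 1 - (\<integral>x. (norm (X x))\<^sup>2 \<partial>M)\<^sup>2 / DIM('b)"
proof -
  interpret P: prob_space "M \<Otimes>\<^sub>M M"
    by (rule prob_space_pair) unfold_locales
  define Z where "Z = {p \<in> space (M \<Otimes>\<^sub>M M). inner (X (fst p)) (X (snd p)) = 0}"
  have Z_sets[measurable]: "Z \<in> sets (M \<Otimes>\<^sub>M M)"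
    unfolding Z_def by measurable
  have inner_square_le: "(inner (X x) (X y))\<^sup>2 \<le> 1" for x y
    using Cauchy_Schwarz_ineq2[of "X x" "X y"] bound[of x] bound[of y]
    by (simp add: abs_square_le_1 order_trans[OF _ mult_le_one])
  have "(\<integral>x. (norm (X x))\<^sup>2 \<partial>M)\<^sup>2 / DIM('b) \<le> (\<integral>(x, y). (inner (X x) (X y))\<^sup>2 \<partial>(M \<Otimes>\<^sub>M M))"
    using bound by (rule integral_inner_square_ge[OF X])
  also have "\<dots> \<le> (\<integral>p. indicator (space (M \<Otimes>\<^sub>M M) - Z) p \<partial>(M \<Otimes>\<^sub>M M))"
  proof (rule integral_mono)
    show "integrable (M \<Otimes>\<^sub>M M) (\<lambda>(x, y). (inner (X x) (X y))\<^sup>2)"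
      by (rule P.integrable_const_bound[where B=1]) (auto simp: inner_square_le)
    show "integrable (M \<Otimes>\<^sub>M M) (indicator (space (M \<Otimes>\<^sub>M M) - Z) :: _ \<Rightarrow> real)"
      by (intro integrable_real_indicator) (auto simp: P.emeasure_finite less_top[symmetric])
    show "(case p of (x, y) \<Rightarrow> (inner (X x) (X y))\<^sup>2) \<le> indicator (space (M \<Otimes>\<^sub>M M) - Z) p"
      if "p \<in> space (M \<Otimes>\<^sub>M M)" for p
      using that inner_square_le[of "fst p" "snd p"] by (auto simp: Z_def indicator_def case_prod_unfold)
  qed
  also have "\<dots> = 1 - measure (M \<Otimes>\<^sub>M M) Z"
    by (simp add: P.prob_compl)
  finally show ?thesis
    by (simp add: Z_def)
qed

theorem corollary1:
  fixes \<mu> :: "'a::euclidean_space measure"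
  assumes "prob_space \<mu>"
    and "sets \<mu> = sets borel"
    and "measure \<mu> (sphere 0 1) = 1"
  shows "measure (\<mu> \<Otimes>\<^sub>M \<mu>)
           {(u, v). u \<in> sphere 0 1 \<and> v \<in> sphere 0 1 \<and> inner u v = 0}
         \<le> (real DIM('a) - 1) / real DIM('a)"
proof -
  interpret prob_space \<mu> by fact
  interpret P: prob_space "\<mu> \<Otimes>\<^sub>M \<mu>"
    by (rule prob_space_pair) unfold_locales
  define X where "X u = indicator (sphere 0 1) u *\<^sub>R u" for u :: 'a
  have space_UNIV: "space \<mu> = UNIV"
    using sets_eq_imp_space_eq[OF assms(2)] by simp
  have X_measurable[measurable]: "X \<in> borel_measurable \<mu>"
    unfolding measurable_cong_sets[OF assms(2) refl] X_def by (measurable, auto simp: borel_closed)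
  have X_bound: "norm (X u) \<le> 1" for u
    by (simp add: X_def indicator_def)
  have "(norm (X u))\<^sup>2 = indicator (sphere 0 1) u" for u
    by (simp add: X_def indicator_def)
  then have second_moment: "(\<integral>u. (norm (X u))\<^sup>2 \<partial>\<mu>) = 1"
    using assms(3) by (simp add: space_UNIV)
  have "measure (\<mu> \<Otimes>\<^sub>M \<mu>) {(u, v). u \<in> sphere 0 1 \<and> v \<in> sphere 0 1 \<and> inner u v = 0}
      \<le> measure (\<mu> \<Otimes>\<^sub>M \<mu>) {p \<in> space (\<mu> \<Otimes>\<^sub>M \<mu>). inner (X (fst p)) (X (snd p)) = 0}"
    by (rule P.finite_measure_mono[rotated], measurable) (auto simp: X_def space_pair_measure space_UNIV)
  also have "\<dots> \<le> 1 - 1 / DIM('a)"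
    using measure_pair_orthogonal_le[OF X_measurable X_bound] by (simp add: second_moment)
  finally show ?thesis
    by (simp add: field_simps)
qed

end
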